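(* Fix integers $\Lambda\ge1$, $K\ge1$ and $N\ge K$, and consider the ensemble $\mathcal B$ of all connectivities in which each of the $K$ users may be connected to an arbitrary subset (possibly empty, possibly all) of the $\Lambda$ caches, all connectivities being equiprobable. Under a fixed uncoded cache placement (common to all connectivities), the optimal average worst-case load satisfies $R^\star_{\text{avg},\mathcal B}(M)\ge R_{\text{avg},\mathcal B,\text{LB}}(M)$ for all $M\in[0,N]$, where $R_{\text{avg},\mathcal B,\text{LB}}$ is the piecewise linear curve with corner points \[ \left(t\frac{N}{\Lambda},\ \sum_{\lambda=0}^{\Lambda}\left(\frac{K\binom{\Lambda}{t+\lambda}}{2^{\Lambda}\binom{\Lambda}{t}}+A_{t,\lambda}\right)\right),\qquad t\in\{0,1,\dots,\Lambda\}, \] with \[ A_{t,\lambda}=\frac{K}{|\mathcal B|}\binom{\Lambda-t}{\lambda}\left(1-\frac{1}{\binom{t+\lambda}{\lambda}}\right),\qquad |\mathcal B|=\binom{K+2^{\Lambda}-1}{K}. \]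
   Context: Multi-access coded caching model: a server holds $N$ files $W_1,\dots,W_N$ of $B$ bits each; $\Lambda$ caches, each storing $MB$ bits; $K$ users, $N\ge K$. Each user $u$ is connected to a subset $\mathcal U_u\subseteq[\Lambda]$ of caches and can read their full contents. A connectivity is identified, up to permutation of users, with the vector $(K_{\mathcal U}:\mathcal U\subseteq[\Lambda])$ of non-negative integers summing to $K$, where $K_{\mathcal U}$ is the number of users whose set of connected caches is exactly $\mathcal U$; $\mathcal B$ is the set of all such vectors (so $|\mathcal B|=\binom{K+2^\Lambda-1}{K}$). Uncoded placement: each file $W_n$ is partitioned into disjoint subfiles $W_{n,\mathcal T}$, $\mathcal T\subseteq[\Lambda]$, and cache $\ell$ stores exactly the $W_{n,\mathcal T}$ with $\ell\in\mathcal T$, at most $MB$ bits per cache. Delivery: each user requests a file index; the server broadcasts an error-free message $X$ depending on the library and demands; each user must decode its requested file from $X$ and its connected caches. For a placement $P$ and a connectivity $b$, $R_b(P)$ is the minimum over delivery schemes (designed knowing $b$) of the worst-case (over demand vectors) value of $|X|/B$. The optimal average worst-case load is $R^\star_{\text{avg},\mathcal B}(M)=\inf_P\frac{1}{|\mathcal B|}\sum_{b\in\mathcal B}R_b(P)$, the infimum over uncoded placements $P$ of cache size $M$ (the placement is fixed, chosen without knowledge of the connectivity). A piecewise linear curve with given corner points is the linear interpolation between consecutive points. Convention: $\binom{n}{k}=0$ if $n<0$, $k<0$ or $n<k$. *)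

theory Defs
  imports Complex_Main "HOL-Library.Multiset"
begin

text \<open>Files are indexed by n < N, bit positions by j < B,
  caches by l < Lam (so the cache set [Lambda] is rendered as {..<Lam}), users by u < K.
  A library is W :: nat => nat => bool (W n j = j-th bit of file n).\<close>

definition valid_lib :: "nat \<Rightarrow> nat \<Rightarrow> (nat \<Rightarrow> nat \<Rightarrow> bool) \<Rightarrow> bool" where
  "valid_lib N B W \<longleftrightarrow> (\<forall>n j. \<not> (n < N \<and> j < B) \<longrightarrow> W n j = False)"

text \<open>Uncoded placement: bit j of file n belongs to the subfile W_{n,T} with T = P n j,
  and cache l stores exactly those bits with l in T; at most M*B bits per cache.\<close>
definition uncoded_placement ::
  "nat \<Rightarrow> nat \<Rightarrow> nat \<Rightarrow> real \<Rightarrow> (nat \<Rightarrow> nat \<Rightarrow> nat set) \<Rightarrow> bool" where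
  "uncoded_placement Lam N B M P \<longleftrightarrow>
     (\<forall>n<N. \<forall>j<B. P n j \<subseteq> {..<Lam}) \<and>
     (\<forall>l<Lam. real (card {(n, j). n < N \<and> j < B \<and> l \<in> P n j}) \<le> M * real B)"

definition cache_view ::
  "nat \<Rightarrow> nat \<Rightarrow> (nat \<Rightarrow> nat \<Rightarrow> nat set) \<Rightarrow> nat set \<Rightarrow> (nat \<Rightarrow> nat \<Rightarrow> bool) \<Rightarrow> nat \<Rightarrow> nat \<Rightarrow> bool" where
  "cache_view N B P U W = (\<lambda>n j. if n < N \<and> j < B \<and> P n j \<inter> U \<noteq> {} then W n j else False)"

text \<open>Load r is achievable for placement P and user-to-cache connection list conn
  (user u is connected to conn ! u): there is an encoder (message as a bit string,
  depending on demands and library) of length at most r*B for every demand vector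
  and library, and decoders such that every user recovers its requested file.\<close>
definition achievable_load ::
  "nat \<Rightarrow> nat \<Rightarrow> nat \<Rightarrow> (nat \<Rightarrow> nat \<Rightarrow> nat set) \<Rightarrow> nat set list \<Rightarrow> real \<Rightarrow> bool" where
  "achievable_load K N B P conn r \<longleftrightarrow>
     (\<exists>(enc :: (nat \<Rightarrow> nat) \<Rightarrow> (nat \<Rightarrow> nat \<Rightarrow> bool) \<Rightarrow> bool list)
       (dec :: nat \<Rightarrow> (nat \<Rightarrow> nat) \<Rightarrow> bool list \<Rightarrow> (nat \<Rightarrow> nat \<Rightarrow> bool) \<Rightarrow> nat \<Rightarrow> bool).
       \<forall>d W. (\<forall>u<K. d u < N) \<and> valid_lib N B W \<longrightarrow>
          real (length (enc d W)) \<le> r * real B \<and>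
          (\<forall>u<K. \<forall>j<B. dec u d (enc d W) (cache_view N B P (conn ! u) W) j = W (d u) j))"

definition load_conn ::
  "nat \<Rightarrow> nat \<Rightarrow> nat \<Rightarrow> (nat \<Rightarrow> nat \<Rightarrow> nat set) \<Rightarrow> nat set list \<Rightarrow> real" where
  "load_conn K N B P conn = Inf {r. achievable_load K N B P conn r}"

text \<open>Connectivities up to user permutation: multisets of K subsets of the caches,
  i.e. the vectors (K_U) with sum K.\<close>
definition connectivities :: "nat \<Rightarrow> nat \<Rightarrow> nat set multiset set" where
  "connectivities Lam K = {b. size b = K \<and> set_mset b \<subseteq> Pow {..<Lam}}"

text \<open>R_b(P): realise b by any ordering of the users (the value does not depend on it).\<close>
definition load_b ::
  "nat \<Rightarrow> nat \<Rightarrow> nat \<Rightarrow> (nat \<Rightarrow> nat \<Rightarrow> nat set) \<Rightarrow> nat set multiset \<Rightarrow> real" where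
  "load_b K N B P b = load_conn K N B P (SOME xs. mset xs = b)"

definition R_star_avg :: "nat \<Rightarrow> nat \<Rightarrow> nat \<Rightarrow> nat \<Rightarrow> real \<Rightarrow> real" where
  "R_star_avg Lam K N B M =
     Inf ((\<lambda>P. (\<Sum>b\<in>connectivities Lam K. load_b K N B P b) / real (card (connectivities Lam K)))
          ` {P. uncoded_placement Lam N B M P})"

definition A_coef :: "nat \<Rightarrow> nat \<Rightarrow> nat \<Rightarrow> nat \<Rightarrow> real" where
  "A_coef Lam K t l =
     real K / real ((K + 2 ^ Lam - 1) choose K) * real ((Lam - t) choose l)
       * (1 - 1 / real ((t + l) choose l))"

definition corner_load :: "nat \<Rightarrow> nat \<Rightarrow> nat \<Rightarrow> real" where
  "corner_load Lam K t =
     (\<Sum>l = 0..Lam. real K * real (Lam choose (t + l)) / (2 ^ Lam * real (Lam choose t))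
                     + A_coef Lam K t l)"

text \<open>Piecewise linear curve through (t N / Lam, corner_load t), t = 0..Lam.
  With s = M Lam / N, on the segment t <= s <= t+1 the value is the linear interpolation.\<close>
definition R_avg_LB :: "nat \<Rightarrow> nat \<Rightarrow> nat \<Rightarrow> real \<Rightarrow> real" where
  "R_avg_LB Lam K N M =
     (let s = M * real Lam / real N; t = min (nat \<lfloor>s\<rfloor>) (Lam - 1)
      in corner_load Lam K t + (s - real t) * (corner_load Lam K (t + 1) - corner_load Lam K t))"

end

theory Submission
  imports Defs "HOL-Combinatorics.Multiset_Permutations"
begin

text \<open>For a connectivity and any ranking of its users (with distinct
  demands), the server message determines every requested bit that is cached at none of the users
  ranked no later than the requesting one, so it is at least as long as the number of such bits;
  averaging over the cyclic shifts of the demand vector turns this into a bound on R_b(P) by a sum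
  over all bits. Ranking users by a uniformly random ordering of the caches, a user connected to U
  counts a bit cached on T with a probability whose sum over U depends only on |T|; for the 2^Lambda
  connectivities in which all users share one cache set U the sharper bound K [T \<inter> U = {}] is used.
  Summed over all connectivities, a bit cached on t caches then contributes |B| times the corner
  value at t. These values form a decreasing convex sequence in t, so Jensen's inequality and the
  cache constraint (the sizes |T| of all bits sum to at most Lambda M B) give the piecewise linear
  bound.\<close>

section \<open>Binomial tails and decreasing convex sequences\<close>

definition binomial_tail :: "nat \<Rightarrow> nat \<Rightarrow> nat" where
  "binomial_tail n t = (\<Sum>l\<le>n. n choose (t + l))"

lemma binomial_tail_Suc:
  "binomial_tail (Suc n) t = (if t = 0 then 0 else n choose (t - 1)) + 2 * binomial_tail n t"
proof (cases t)
  case 0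
  have "binomial_tail m 0 = 2 ^ m" for m
    unfolding binomial_tail_def using choose_row_sum[of m] by simp
  then show ?thesis using 0 by simp
next
  case (Suc t')
  have "binomial_tail (Suc n) t = (\<Sum>l\<le>Suc n. n choose (t' + l)) + (\<Sum>l\<le>Suc n. n choose (t + l))"
    unfolding binomial_tail_def Suc by (simp add: sum.distrib)
  also have "(\<Sum>l\<le>Suc n. n choose (t' + l)) = (n choose t') + binomial_tail n t"
    unfolding binomial_tail_def Suc by (subst sum.atMost_Suc_shift) simp
  also have "(\<Sum>l\<le>Suc n. n choose (t + l)) = binomial_tail n t"
    unfolding binomial_tail_def using Suc by simp
  finally show ?thesis using Suc by simp
qed

lemma binomial_tail_eq:
  "binomial_tail n t = (n choose t) + (\<Sum>d<n. 2 ^ d * ((n - Suc d) choose t))"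
proof (induction n)
  case 0
  then show ?case by (simp add: binomial_tail_def)
next
  case (Suc n)
  have shift: "(\<Sum>d<Suc n. 2 ^ d * ((Suc n - Suc d) choose t))
      = (n choose t) + 2 * (\<Sum>d<n. 2 ^ d * ((n - Suc d) choose t))"
    by (subst sum.lessThan_Suc_shift) (simp add: sum_distrib_left mult.assoc)
  have pascal: "Suc n choose t = (if t = 0 then 0 else n choose (t - 1)) + (n choose t)"
    by (cases t) auto
  show ?case unfolding binomial_tail_Suc Suc.IH shift pascal by simp
qed

definition decreasing_convex :: "nat \<Rightarrow> (nat \<Rightarrow> real) \<Rightarrow> bool" where
  "decreasing_convex L g \<longleftrightarrow>
     (\<forall>t. t + 2 \<le> L \<longrightarrow> g (t + 1) - g t \<le> g (t + 2) - g (t + 1)) \<and>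
     (\<forall>t. t + 1 \<le> L \<longrightarrow> g (t + 1) \<le> g t)"

lemma decreasing_convex_const: "decreasing_convex L (\<lambda>t. c)"
  by (simp add: decreasing_convex_def)

lemma decreasing_convex_scale:
  "decreasing_convex L f \<Longrightarrow> 0 \<le> a \<Longrightarrow> decreasing_convex L (\<lambda>t. a * f t)"
  unfolding decreasing_convex_def
  by (auto simp: right_diff_distrib[symmetric] intro: mult_left_mono)

lemma decreasing_convex_add:
  "decreasing_convex L f \<Longrightarrow> decreasing_convex L g \<Longrightarrow> decreasing_convex L (\<lambda>t. f t + g t)"
  unfolding decreasing_convex_def by (smt (verit))

lemma decreasing_convex_sum:
  "finite D \<Longrightarrow> (\<And>d. d \<in> D \<Longrightarrow> decreasing_convex L (f d)) \<Longrightarrow>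
    decreasing_convex L (\<lambda>t. \<Sum>d\<in>D. f d t)"
  by (induction D rule: finite_induct) (simp_all add: decreasing_convex_const decreasing_convex_add)

lemma decreasing_convex_cong:
  "decreasing_convex L f \<Longrightarrow> (\<And>t. t \<le> L \<Longrightarrow> f t = g t) \<Longrightarrow> decreasing_convex L g"
  unfolding decreasing_convex_def by auto

lemma decreasing_convex_power2: "decreasing_convex L (\<lambda>t. 2 ^ (L - t))"
  unfolding decreasing_convex_def
proof (intro conjI allI impI)
  fix t assume "t + 2 \<le> L"
  then have "L - t = (L - (t + 2)) + 2" "L - (t + 1) = (L - (t + 2)) + 1" by auto
  then show "(2::real) ^ (L - (t + 1)) - 2 ^ (L - t) \<le> 2 ^ (L - (t + 2)) - 2 ^ (L - (t + 1))"
    by (simp add: power_add)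
next
  fix t assume "t + 1 \<le> L"
  then show "(2::real) ^ (L - (t + 1)) \<le> 2 ^ (L - t)" by (intro power_increasing) auto
qed

lemma choose_ratio_Suc:
  assumes "t < m"
  shows "real ((m - e) choose (t + 1)) / real (m choose (t + 1))
       = real ((m - e) choose t) / real (m choose t) * (real (m - e - t) / real (m - t))"
proof -
  have step: "real (k choose (t + 1)) * real (t + 1) = real (k choose t) * real (k - t)" for k
  proof -
    have "(k choose (t + 1)) * (t + 1) = (k choose t) * (k - t)"
      using binomial_absorb_comp[of k t] binomial_absorption[of t k] by (simp add: mult.commute)
    then show ?thesis by (metis of_nat_mult)
  qed
  have "real ((m - e) choose (t + 1)) / real (m choose (t + 1))
      = (real ((m - e) choose (t + 1)) * real (t + 1)) / (real (m choose (t + 1)) * real (t + 1))"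
    by simp
  also have "\<dots> = (real ((m - e) choose t) * real (m - e - t)) / (real (m choose t) * real (m - t))"
    unfolding step ..
  finally show ?thesis by simp
qed

lemma two_mult_ratio_le:
  fixes e u :: real
  assumes "1 \<le> e" "e < u"
  shows "2 * ((u - e) / u) \<le> 1 + (u - e) / u * ((u - 1 - e) / (u - 1))"
proof -
  have u: "0 < u" "0 < u - 1" using assms by auto
  have "2 * ((u - e) / u) * (u * (u - 1)) = 2 * (u - e) * (u - 1)"
    using u by simp
  also have "\<dots> \<le> u * (u - 1) + (u - e) * (u - 1 - e)"
    using assms by (simp add: algebra_simps)
  also have "\<dots> = (1 + (u - e) / u * ((u - 1 - e) / (u - 1))) * (u * (u - 1))"
    using u by (simp add: distrib_right)
  finally show ?thesis by (rule mult_right_le_imp_le) (use u in simp)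
qed

lemma decreasing_convex_choose_ratio:
  assumes "1 \<le> e"
  shows "decreasing_convex m (\<lambda>t. real ((m - e) choose t) / real (m choose t))"
proof -
  define q where "q t = real ((m - e) choose t) / real (m choose t)" for t
  define r where "r t = real (m - e - t) / real (m - t)" for t
  have q_Suc: "q (t + 1) = q t * r t" if "t < m" for t
    unfolding q_def r_def by (rule choose_ratio_Suc[OF that])
  have q_nonneg: "0 \<le> q t" for t
    unfolding q_def by simp
  have "r t \<le> 1" for t
    unfolding r_def by (cases "t < m") (simp_all add: divide_le_eq_1)
  then have decr: "q (t + 1) \<le> q t" if "t < m" for t
    using q_Suc[OF that] q_nonneg[of t] by (simp add: mult_left_le)
  have r_convex: "2 * r t \<le> 1 + r t * r (t + 1)" if "t + 2 \<le> m" for t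
  proof (cases "e < m - t")
    case True
    then have "r t = (real (m - t) - real e) / real (m - t)"
      "r (t + 1) = (real (m - t) - 1 - real e) / (real (m - t) - 1)"
      using that unfolding r_def by (simp_all add: of_nat_diff algebra_simps)
    then show ?thesis using two_mult_ratio_le[of "real e" "real (m - t)"] assms True by simp
  next
    case False
    then show ?thesis unfolding r_def by simp
  qed
  have "q (t + 1) - q t \<le> q (t + 2) - q (t + 1)" if "t + 2 \<le> m" for t
  proof -
    have "q t * (2 * r t) \<le> q t * (1 + r t * r (t + 1))"
      using r_convex[OF that] q_nonneg by (rule mult_left_mono)
    then show ?thesis
      using q_Suc[of t] q_Suc[of "t + 1"] that by (simp add: numeral_2_eq_2 algebra_simps)
  qed
  with decr have "decreasing_convex m q"
    unfolding decreasing_convex_def by auto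
  then show ?thesis unfolding q_def .
qed

definition binomial_tail_ratio :: "nat \<Rightarrow> nat \<Rightarrow> real" where
  "binomial_tail_ratio L t = real (binomial_tail L t) / real (L choose t)"

lemma decreasing_convex_binomial_tail_ratio: "decreasing_convex L (binomial_tail_ratio L)"
proof -
  have eq: "binomial_tail_ratio L t
      = 1 + (\<Sum>d<L. 2 ^ d * (real ((L - Suc d) choose t) / real (L choose t)))"
    if "t \<le> L" for t
    using that unfolding binomial_tail_ratio_def binomial_tail_eq
    by (simp add: add_divide_distrib sum_divide_distrib)
  have "decreasing_convex L
      (\<lambda>t. 1 + (\<Sum>d<L. 2 ^ d * (real ((L - Suc d) choose t) / real (L choose t))))"
    by (intro decreasing_convex_add decreasing_convex_const decreasing_convex_sum decreasing_convex_scale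
        decreasing_convex_choose_ratio) auto
  then show ?thesis by (rule decreasing_convex_cong) (simp add: eq)
qed

lemma choose_shift_ratio:
  assumes "t \<le> L"
  shows "real ((L - t) choose l) / real ((t + l) choose l) = real (L choose (t + l)) / real (L choose t)"
proof (cases "t + l \<le> L")
  case True
  have "(L choose (t + l)) * ((t + l) choose t) = (L choose t) * ((L - t) choose (t + l - t))"
    by (rule choose_mult) (use True in auto)
  then have "(L choose (t + l)) * ((t + l) choose l) = (L choose t) * ((L - t) choose l)"
    by (metis add_diff_cancel_left' binomial_symmetric le_add1)
  moreover have "real ((t + l) choose l) > 0" "real (L choose t) > 0" using assms by auto
  ultimately show ?thesis by (simp add: field_simps flip: of_nat_mult)
next
  case False
  then show ?thesis using assms by (simp add: binomial_eq_0)
qed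

lemma corner_load_eq:
  fixes Lam K t :: nat
  assumes "t \<le> Lam"
  defines "\<beta> \<equiv> real K / real ((K + 2 ^ Lam - 1) choose K)"
  shows "corner_load Lam K t
    = (real K / 2 ^ Lam - \<beta>) * binomial_tail_ratio Lam t + \<beta> * 2 ^ (Lam - t)"
proof -
  have choose_sum: "(\<Sum>l\<le>Lam. real ((Lam - t) choose l)) = 2 ^ (Lam - t)"
  proof -
    have "(\<Sum>l\<le>Lam. (Lam - t) choose l) = (\<Sum>l\<le>Lam - t. (Lam - t) choose l)"
      by (rule sum.mono_neutral_right) auto
    then show ?thesis using choose_row_sum[of "Lam - t"] by (metis of_nat_numeral of_nat_power of_nat_sum)
  qed
  have "A_coef Lam K t l = \<beta> * real ((Lam - t) choose l)
      - \<beta> * (real ((Lam - t) choose l) / real ((t + l) choose l))" for l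
    unfolding A_coef_def \<beta>_def by (simp add: right_diff_distrib)
  then have "A_coef Lam K t l = \<beta> * real ((Lam - t) choose l)
      - \<beta> * (real (Lam choose (t + l)) / real (Lam choose t))" for l
    unfolding choose_shift_ratio[OF assms(1)] .
  then have "corner_load Lam K t
      = real K / 2 ^ Lam * (\<Sum>l\<le>Lam. real (Lam choose (t + l)) / real (Lam choose t))
        + \<beta> * (\<Sum>l\<le>Lam. real ((Lam - t) choose l))
        - \<beta> * (\<Sum>l\<le>Lam. real (Lam choose (t + l)) / real (Lam choose t))"
    unfolding corner_load_def
    by (simp add: atLeast0AtMost sum.distrib sum_subtractf sum_distrib_left)
  also have "(\<Sum>l\<le>Lam. real (Lam choose (t + l)) / real (Lam choose t)) = binomial_tail_ratio Lam t"
    unfolding binomial_tail_ratio_def binomial_tail_def by (simp add: sum_divide_distrib)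
  finally show ?thesis unfolding choose_sum by (simp add: algebra_simps)
qed

lemma decreasing_convex_corner_load:
  assumes "2 ^ Lam \<le> (K + 2 ^ Lam - 1) choose K"
  shows "decreasing_convex Lam (corner_load Lam K)"
proof -
  define \<beta> where "\<beta> = real K / real ((K + 2 ^ Lam - 1) choose K)"
  have "(0::nat) < 2 ^ Lam" by simp
  then have "0 < (K + 2 ^ Lam - 1) choose K" using assms by linarith
  then have "\<beta> \<le> real K / 2 ^ Lam"
    unfolding \<beta>_def using assms
    by (intro divide_left_mono) (auto simp flip: of_nat_le_iff)
  then have "decreasing_convex Lam
      (\<lambda>t. (real K / 2 ^ Lam - \<beta>) * binomial_tail_ratio Lam t + \<beta> * 2 ^ (Lam - t))"
    by (intro decreasing_convex_add decreasing_convex_scale decreasing_convex_binomial_tail_ratio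
        decreasing_convex_power2) (auto simp: \<beta>_def)
  then show ?thesis by (rule decreasing_convex_cong) (simp add: corner_load_eq \<beta>_def)
qed

lemma decreasing_convex_increment_mono:
  assumes "decreasing_convex L g" "i \<le> j" "j + 1 \<le> L"
  shows "g (i + 1) - g i \<le> g (j + 1) - g j"
  using assms(2,3)
proof (induction j)
  case (Suc j)
  show ?case
  proof (cases "i = Suc j")
    case False
    then have "g (i + 1) - g i \<le> g (j + 1) - g j" using Suc by simp
    moreover have "g (j + 1) - g j \<le> g (j + 2) - g (j + 1)"
      using assms(1) Suc.prems unfolding decreasing_convex_def by simp
    ultimately show ?thesis by (simp add: numeral_2_eq_2)
  qed simp
qed simp

lemma decreasing_convex_chord_le:
  assumes g: "decreasing_convex L g" and "t0 + 1 \<le> L" "k \<le> L"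
  shows "g t0 + (real k - real t0) * (g (t0 + 1) - g t0) \<le> g k"
proof -
  define \<delta> where "\<delta> = g (t0 + 1) - g t0"
  have up: "g t0 + real j * \<delta> \<le> g (t0 + j)" if "t0 + j \<le> L" for j
    using that
  proof (induction j)
    case (Suc j)
    then have "\<delta> \<le> g (t0 + j + 1) - g (t0 + j)"
      unfolding \<delta>_def by (intro decreasing_convex_increment_mono[OF g]) simp_all
    then show ?case using Suc by (simp add: algebra_simps)
  qed simp
  have down: "g t0 - real j * \<delta> \<le> g (t0 - j)" if "j \<le> t0" for j
    using that
  proof (induction j)
    case (Suc j)
    then have "g (t0 - Suc j + 1) - g (t0 - Suc j) \<le> \<delta>"
      unfolding \<delta>_def using assms(2) by (intro decreasing_convex_increment_mono[OF g]) simp_all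
    moreover have "t0 - Suc j + 1 = t0 - j" using Suc.prems by simp
    ultimately show ?case using Suc by (simp add: algebra_simps)
  qed simp
  show ?thesis
  proof (cases "k \<le> t0")
    case True
    then show ?thesis using down[of "t0 - k"] by (simp add: of_nat_diff algebra_simps \<delta>_def)
  next
    case False
    then show ?thesis using up[of "k - t0"] assms(3) by (simp add: of_nat_diff algebra_simps \<delta>_def)
  qed
qed

lemma decreasing_convex_sum_ge_chord:
  fixes k :: "'a \<Rightarrow> nat"
  assumes g: "decreasing_convex L g" and t0: "t0 + 1 \<le> L" and "finite X"
    and k: "\<And>x. x \<in> X \<Longrightarrow> k x \<le> L"
    and mean: "(\<Sum>x\<in>X. real (k x)) \<le> real (card X) * s"
  shows "real (card X) * (g t0 + (s - real t0) * (g (t0 + 1) - g t0)) \<le> (\<Sum>x\<in>X. g (k x))"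
proof -
  define \<delta> where "\<delta> = g (t0 + 1) - g t0"
  have "\<delta> \<le> 0" using g t0 unfolding decreasing_convex_def \<delta>_def by simp
  have "real (card X) * (g t0 + (s - real t0) * \<delta>)
      = real (card X) * g t0 + (real (card X) * s - real (card X) * real t0) * \<delta>"
    by (simp add: algebra_simps)
  also have "\<dots> \<le> real (card X) * g t0 + ((\<Sum>x\<in>X. real (k x)) - real (card X) * real t0) * \<delta>"
    using mean \<open>\<delta> \<le> 0\<close> by (intro add_left_mono mult_right_mono_neg) auto
  also have "\<dots> = (\<Sum>x\<in>X. g t0 + (real (k x) - real t0) * \<delta>)"
    by (simp add: sum.distrib sum_subtractf sum_distrib_left sum_distrib_right algebra_simps)
  also have "\<dots> \<le> (\<Sum>x\<in>X. g (k x))"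
    using decreasing_convex_chord_le[OF g t0] k unfolding \<delta>_def by (intro sum_mono) auto
  finally show ?thesis unfolding \<delta>_def .
qed

section \<open>Precedence of cache sets in a random ordering of the caches\<close>

primrec position :: "'a list \<Rightarrow> 'a \<Rightarrow> nat" where
  "position [] a = 0"
| "position (x # xs) a = (if x = a then 0 else Suc (position xs a))"

definition precedes :: "'a list \<Rightarrow> 'a set \<Rightarrow> 'a set \<Rightarrow> bool" where
  "precedes xs U T \<longleftrightarrow> (\<forall>a\<in>U. \<forall>x\<in>T. position xs a < position xs x)"

lemma precedes_Cons_mem: "x \<in> T \<Longrightarrow> precedes (x # ys) U T \<longleftrightarrow> U = {}"
  unfolding precedes_def by (auto split: if_splits)

lemma precedes_Cons_not_mem: "x \<notin> T \<Longrightarrow> precedes (x # ys) U T \<longleftrightarrow> precedes ys (U - {x}) T"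
  unfolding precedes_def by (auto split: if_splits)

lemma card_subsets_Diff_singleton:
  assumes "finite A" "x \<in> A"
  shows "card {U. U \<subseteq> A \<and> Q (U - {x})} = 2 * card {V. V \<subseteq> A - {x} \<and> Q V}"
proof -
  let ?S = "{V. V \<subseteq> A - {x} \<and> Q V}"
  have "{U. U \<subseteq> A \<and> Q (U - {x})} = ?S \<union> insert x ` ?S"
  proof (intro set_eqI iffI)
    fix U assume "U \<in> {U. U \<subseteq> A \<and> Q (U - {x})}"
    then show "U \<in> ?S \<union> insert x ` ?S"
      by (cases "x \<in> U") (auto intro!: image_eqI[of U "insert x" "U - {x}"])
  qed (use assms in \<open>auto simp: insert_absorb subset_Diff_insert Diff_insert0\<close>)
  moreover have "finite ?S" using assms(1) by (auto intro: finite_subset[of _ "Pow (A - {x})"])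
  moreover have "inj_on (insert x) ?S" by (auto intro!: inj_onI)
  moreover have "?S \<inter> insert x ` ?S = {}" by auto
  ultimately show ?thesis by (simp add: card_Un_disjoint card_image)
qed

lemma sum_permutations_of_set_Cons:
  assumes "finite A" "A \<noteq> {}"
  shows "(\<Sum>xs\<in>permutations_of_set A. f xs) = (\<Sum>x\<in>A. \<Sum>ys\<in>permutations_of_set (A - {x}). f (x # ys))"
proof -
  have "(\<Sum>xs\<in>permutations_of_set A. f xs)
      = (\<Sum>x\<in>A. \<Sum>xs\<in>(\<lambda>xs. x # xs) ` permutations_of_set (A - {x}). f xs)"
    unfolding permutations_of_set_nonempty[OF assms(2)] by (rule sum.UNION_disjoint) (use assms(1) in auto)
  also have "\<dots> = (\<Sum>x\<in>A. \<Sum>ys\<in>permutations_of_set (A - {x}). f (x # ys))"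
    by (rule sum.cong[OF refl], subst sum.reindex) (auto simp: inj_on_def)
  finally show ?thesis .
qed

lemma binomial_tail_Suc_mult:
  assumes "t \<le> n" and Y: "Y * (n choose t) = (Suc n - t) * (2 * (fact n * binomial_tail n t))"
  shows "(t * fact n + Y) * (Suc n choose t) = fact (Suc n) * binomial_tail (Suc n) t"
proof -
  have absorb: "(Suc n - t) * (Suc n choose t) = Suc n * (n choose t)"
    using binomial_absorb_comp[of "Suc n" t] by simp
  have lower: "t * (Suc n choose t) = Suc n * (if t = 0 then 0 else n choose (t - 1))"
  proof (cases t)
    case (Suc k)
    then show ?thesis using Suc_times_binomial_eq[of n k] by (simp only: mult.commute) simp
  qed simp
  have "(t * fact n + Y) * (Suc n choose t) * (n choose t)
      = fact n * (t * (Suc n choose t)) * (n choose t) + Y * (n choose t) * (Suc n choose t)"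
    by (simp add: algebra_simps)
  also have "\<dots> = fact n * (Suc n * (if t = 0 then 0 else n choose (t - 1))) * (n choose t)
      + (Suc n - t) * (Suc n choose t) * (2 * (fact n * binomial_tail n t))"
    unfolding lower Y by (simp add: algebra_simps)
  also have "\<dots> = fact (Suc n) * binomial_tail (Suc n) t * (n choose t)"
    unfolding absorb binomial_tail_Suc by (simp add: algebra_simps)
  finally show ?thesis using assms(1) by simp
qed

definition preceding_pairs :: "'a set \<Rightarrow> 'a set \<Rightarrow> nat" where
  "preceding_pairs A T = (\<Sum>xs\<in>permutations_of_set A. card {U. U \<subseteq> A \<and> precedes xs U T})"

lemma preceding_pairs_rec:
  assumes "finite A" "T \<subseteq> A" "A \<noteq> {}"
  shows "preceding_pairs A T = card T * fact (card A - 1) + (\<Sum>x\<in>A - T. 2 * preceding_pairs (A - {x}) T)"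
proof -
  define F where
    "F x = (\<Sum>ys\<in>permutations_of_set (A - {x}). card {U. U \<subseteq> A \<and> precedes (x # ys) U T})" for x
  have head_in_T: "F x = fact (card A - 1)" if "x \<in> T" for x
  proof -
    have "{U. U \<subseteq> A \<and> precedes (x # ys) U T} = {{}}" for ys
      using that by (auto simp: precedes_Cons_mem)
    then show ?thesis using that assms(1,2) by (auto simp: F_def)
  qed
  have head_notin_T: "F x = 2 * preceding_pairs (A - {x}) T" if "x \<in> A - T" for x
  proof -
    have "card {U. U \<subseteq> A \<and> precedes (x # ys) U T} = 2 * card {V. V \<subseteq> A - {x} \<and> precedes ys V T}" for ys
      using that card_subsets_Diff_singleton[OF assms(1), of x "\<lambda>V. precedes ys V T"]
      by (simp add: precedes_Cons_not_mem)
    then show ?thesis unfolding F_def preceding_pairs_def by (simp add: sum_distrib_left)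
  qed
  have "preceding_pairs A T = (\<Sum>x\<in>A. F x)"
    unfolding preceding_pairs_def F_def using assms(1,3) by (rule sum_permutations_of_set_Cons)
  also have "\<dots> = (\<Sum>x\<in>A - T. F x) + (\<Sum>x\<in>T. F x)"
    by (rule sum.subset_diff[OF assms(2,1)])
  finally show ?thesis by (simp add: head_in_T head_notin_T)
qed

lemma preceding_pairs_eq:
  assumes "finite A" "T \<subseteq> A"
  shows "preceding_pairs A T * (card A choose card T) = fact (card A) * binomial_tail (card A) (card T)"
  using assms
proof (induction "card A" arbitrary: A)
  case 0
  then show ?case by (simp add: preceding_pairs_def binomial_tail_def precedes_def)
next
  case (Suc n)
  have "A \<noteq> {}" using Suc.hyps(2) by auto
  then have rec: "preceding_pairs A T = card T * fact n + (\<Sum>x\<in>A - T. 2 * preceding_pairs (A - {x}) T)"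
    using preceding_pairs_rec[OF Suc.prems] Suc.hyps(2)[symmetric] by simp
  have card_T: "card T \<le> Suc n" using Suc.hyps(2) Suc.prems card_mono by metis
  show ?case
  proof (cases "card T = Suc n")
    case True
    then have no_rest: "A - T = {}" using Suc.hyps(2) Suc.prems by (metis card_subset_eq Diff_eq_empty_iff)
    have "binomial_tail (Suc n) (Suc n) = 1"
      by (simp add: binomial_tail_Suc) (simp add: binomial_tail_def)
    then show ?thesis using rec True Suc.hyps(2)[symmetric] unfolding no_rest by simp
  next
    case False
    have "preceding_pairs (A - {x}) T * (n choose card T) = fact n * binomial_tail n (card T)"
      if "x \<in> A - T" for x
    proof -
      have "T \<subseteq> A - {x}" using Suc.prems(2) that by blast
      moreover have "n = card (A - {x})" using Suc.hyps(2) that by simp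
      ultimately show ?thesis using Suc.hyps(1) Suc.prems(1) by simp
    qed
    moreover have "card (A - T) = Suc n - card T"
      using Suc.prems Suc.hyps(2) by (simp add: card_Diff_subset finite_subset)
    ultimately have "(\<Sum>x\<in>A - T. 2 * preceding_pairs (A - {x}) T) * (n choose card T)
        = (Suc n - card T) * (2 * (fact n * binomial_tail n (card T)))"
      by (simp add: sum_distrib_right mult.assoc mult.left_commute)
    then show ?thesis
      unfolding rec Suc.hyps(2)[symmetric] using False card_T by (intro binomial_tail_Suc_mult) simp_all
  qed
qed

lemma sum_card_filter_swap:
  assumes "finite A" "finite B"
  shows "(\<Sum>x\<in>A. card {y \<in> B. R x y}) = (\<Sum>y\<in>B. card {x \<in> A. R x y})"
proof -
  have card_as_sum: "card {y \<in> Y. P y} = (\<Sum>y\<in>Y. if P y then 1 else 0)" if "finite Y" for Y P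
    using sum.inter_filter[OF that, of "\<lambda>_. 1 :: nat" P] by simp
  show ?thesis unfolding card_as_sum[OF assms(1)] card_as_sum[OF assms(2)] by (rule sum.swap)
qed

definition precedence_prob :: "nat \<Rightarrow> nat set \<Rightarrow> nat set \<Rightarrow> real" where
  "precedence_prob L U T = real (card {xs \<in> permutations_of_set {..<L}. precedes xs U T}) / fact L"

lemma sum_precedence_prob:
  assumes "T \<subseteq> {..<L}"
  shows "(\<Sum>U\<in>Pow {..<L}. precedence_prob L U T) = binomial_tail_ratio L (card T)"
proof -
  have "card T \<le> L" using card_mono[OF _ assms] by simp
  then have choose_pos: "real (L choose card T) > 0" by simp
  have "(\<Sum>U\<in>Pow {..<L}. card {xs \<in> permutations_of_set {..<L}. precedes xs U T})
      = (\<Sum>xs\<in>permutations_of_set {..<L}. card {U. U \<subseteq> {..<L} \<and> precedes xs U T})"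
    by (subst sum_card_filter_swap) (simp_all add: Pow_def Collect_conj_eq)
  then have "real (\<Sum>U\<in>Pow {..<L}. card {xs \<in> permutations_of_set {..<L}. precedes xs U T})
      * real (L choose card T) = fact L * real (binomial_tail L (card T))"
    using arg_cong[OF preceding_pairs_eq[of "{..<L}" T], of real] assms
    unfolding preceding_pairs_def
    by (simp del: of_nat_sum)
  then show ?thesis
    using choose_pos unfolding precedence_prob_def binomial_tail_ratio_def
    by (simp add: field_simps flip: sum_divide_distrib)
qed

section \<open>A counting bound for a fixed connectivity\<close>

lemma card_le_if_inj_on_Pow_bool_lists:
  fixes f :: "'a set \<Rightarrow> bool list"
  assumes "finite S" "inj_on f (Pow S)" "\<And>Z. Z \<subseteq> S \<Longrightarrow> length (f Z) \<le> L"
  shows "card S \<le> L"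
proof -
  have "2 ^ card S = card (f ` Pow S)" using card_image[OF assms(2)] assms(1) by (simp add: card_Pow)
  also have "\<dots> \<le> card {xs. set xs \<subseteq> (UNIV :: bool set) \<and> length xs \<le> L}"
    by (rule card_mono) (use assms(3) finite_lists_length_le[of "UNIV :: bool set" L] in auto)
  also have "\<dots> = (\<Sum>i\<le>L. 2 ^ i)" using card_lists_length_le[of "UNIV :: bool set" L] by simp
  also have "\<dots> < 2 ^ Suc L" by (induction L) auto
  finally show ?thesis using power_strict_increasing_iff[of "2::nat" "card S" "Suc L"] by simp
qed

lemma cache_view_cong:
  "(\<And>n j. n < N \<Longrightarrow> j < B \<Longrightarrow> P n j \<inter> U \<noteq> {} \<Longrightarrow> W n j = W' n j) \<Longrightarrow>
    cache_view N B P U W = cache_view N B P U W'"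
  unfolding cache_view_def by (intro ext) auto

definition unseen_bits ::
  "nat \<Rightarrow> nat \<Rightarrow> (nat \<Rightarrow> nat \<Rightarrow> nat set) \<Rightarrow> nat set list \<Rightarrow> (nat \<Rightarrow> nat) \<Rightarrow> (nat \<Rightarrow> nat) \<Rightarrow> (nat \<times> nat) set"
where
  "unseen_bits K B P cs d rk =
     {(d u, j) |u j. u < K \<and> j < B \<and> P (d u) j \<inter> (\<Union>v\<in>{v. v < K \<and> rk v \<le> rk u}. cs ! v) = {}}"

lemma unseen_bits_subset: "\<forall>u<K. d u < N \<Longrightarrow> unseen_bits K B P cs d rk \<subseteq> {..<N} \<times> {..<B}"
  unfolding unseen_bits_def by auto

text \<open>Users decode in the order of their rank, and each one reads only unseen bits of
  users ranked strictly earlier.\<close>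

lemma decoding_determines_unseen_bits:
  fixes enc :: "(nat \<Rightarrow> nat \<Rightarrow> bool) \<Rightarrow> bool list"
  assumes dec: "\<And>W u j. valid_lib N B W \<Longrightarrow> u < K \<Longrightarrow> j < B \<Longrightarrow>
      dec u (enc W) (cache_view N B P (cs ! u) W) j = W (d u) j"
    and dN: "\<forall>u<K. d u < N"
    and Z: "Z1 \<subseteq> unseen_bits K B P cs d rk" "Z2 \<subseteq> unseen_bits K B P cs d rk"
    and same: "enc (\<lambda>n j. (n, j) \<in> Z1) = enc (\<lambda>n j. (n, j) \<in> Z2)"
    and "u < K" "j < B"
  shows "(d u, j) \<in> Z1 \<longleftrightarrow> (d u, j) \<in> Z2"
  using \<open>u < K\<close> \<open>j < B\<close>
proof (induction "rk u" arbitrary: u j rule: less_induct)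
  case less
  let ?S = "unseen_bits K B P cs d rk"
  let ?lib = "\<lambda>Z n j. (n, j) \<in> Z"
  have valid: "valid_lib N B (?lib Z)" if "Z \<subseteq> ?S" for Z
    using that unseen_bits_subset[OF dN, of B P cs rk] unfolding valid_lib_def by auto
  have "cache_view N B P (cs ! u) (?lib Z1) = cache_view N B P (cs ! u) (?lib Z2)"
  proof (rule cache_view_cong)
    fix n j' assume seen: "P n j' \<inter> cs ! u \<noteq> {}"
    show "?lib Z1 n j' = ?lib Z2 n j'"
    proof (cases "(n, j') \<in> ?S")
      case True
      then obtain v where v: "v < K" "n = d v" "j' < B"
        and unseen: "P n j' \<inter> (\<Union>w\<in>{w. w < K \<and> rk w \<le> rk v}. cs ! w) = {}"
        unfolding unseen_bits_def by auto
      have "rk v < rk u"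
      proof (rule ccontr)
        assume "\<not> rk v < rk u"
        then have "cs ! u \<subseteq> (\<Union>w\<in>{w. w < K \<and> rk w \<le> rk v}. cs ! w)" using less.prems(1) by auto
        then show False using seen unseen by auto
      qed
      then show ?thesis using less.hyps[of v j'] v by simp
    next
      case False
      then show ?thesis using Z by auto
    qed
  qed
  then show ?case
    using dec[OF valid, of Z1 u j] dec[OF valid, of Z2 u j] Z less.prems same by simp
qed

lemma inj_on_encoder_unseen_bits:
  fixes enc :: "(nat \<Rightarrow> nat \<Rightarrow> bool) \<Rightarrow> bool list"
  assumes dec: "\<And>W u j. valid_lib N B W \<Longrightarrow> u < K \<Longrightarrow> j < B \<Longrightarrow>
      dec u (enc W) (cache_view N B P (cs ! u) W) j = W (d u) j"
    and dN: "\<forall>u<K. d u < N"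
  shows "inj_on (\<lambda>Z. enc (\<lambda>n j. (n, j) \<in> Z)) (Pow (unseen_bits K B P cs d rk))"
proof (rule inj_onI)
  fix Z1 Z2 assume Z: "Z1 \<in> Pow (unseen_bits K B P cs d rk)" "Z2 \<in> Pow (unseen_bits K B P cs d rk)"
    and same: "enc (\<lambda>n j. (n, j) \<in> Z1) = enc (\<lambda>n j. (n, j) \<in> Z2)"
  have "x \<in> Z1 \<longleftrightarrow> x \<in> Z2" if "x \<in> unseen_bits K B P cs d rk" for x
    using that decoding_determines_unseen_bits[OF dec dN _ _ same] Z unfolding unseen_bits_def by auto
  then show "Z1 = Z2" using Z by blast
qed

lemma card_unseen_bits_le:
  assumes "achievable_load K N B P cs r" and dN: "\<forall>u<K. d u < N"
  shows "real (card (unseen_bits K B P cs d rk)) \<le> r * real B"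
proof -
  obtain enc :: "(nat \<Rightarrow> nat) \<Rightarrow> (nat \<Rightarrow> nat \<Rightarrow> bool) \<Rightarrow> bool list"
     and dec :: "nat \<Rightarrow> (nat \<Rightarrow> nat) \<Rightarrow> bool list \<Rightarrow> (nat \<Rightarrow> nat \<Rightarrow> bool) \<Rightarrow> nat \<Rightarrow> bool"
    where scheme0: "\<forall>d W. (\<forall>u<K. d u < N) \<and> valid_lib N B W \<longrightarrow>
          real (length (enc d W)) \<le> r * real B \<and>
          (\<forall>u<K. \<forall>j<B. dec u d (enc d W) (cache_view N B P (cs ! u) W) j = W (d u) j)"
    using assms(1) unfolding achievable_load_def by (elim exE) (rule that)
  have scheme: "real (length (enc d W)) \<le> r * real B \<and>
      (\<forall>u<K. \<forall>j<B. dec u d (enc d W) (cache_view N B P (cs ! u) W) j = W (d u) j)"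
    if "valid_lib N B W" for W
    using scheme0 dN that by blast
  let ?S = "unseen_bits K B P cs d rk"
  have valid: "valid_lib N B (\<lambda>n j. (n, j) \<in> Z)" if "Z \<subseteq> ?S" for Z
    using that unseen_bits_subset[OF dN, of B P cs rk] unfolding valid_lib_def by auto
  have "r * real B \<ge> 0"
    using scheme[of "\<lambda>_ _. False"] of_nat_0_le_iff order_trans unfolding valid_lib_def by blast
  have "card ?S \<le> nat \<lfloor>r * real B\<rfloor>"
  proof (rule card_le_if_inj_on_Pow_bool_lists)
    show "finite ?S" using unseen_bits_subset[OF dN, of B P cs rk] by (rule finite_subset) simp
    show "inj_on (\<lambda>Z. enc d (\<lambda>n j. (n, j) \<in> Z)) (Pow ?S)"
      using scheme dN by (intro inj_on_encoder_unseen_bits[where dec = "\<lambda>u. dec u d"]) auto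
    show "length (enc d (\<lambda>n j. (n, j) \<in> Z)) \<le> nat \<lfloor>r * real B\<rfloor>" if "Z \<subseteq> ?S" for Z
      using scheme[OF valid[OF that]] by linarith
  qed
  then show ?thesis using \<open>r * real B \<ge> 0\<close> by linarith
qed

lemma sum_unseen_bits_le:
  fixes \<Phi> :: "nat \<Rightarrow> nat set \<Rightarrow> bool" and rk :: "nat \<Rightarrow> nat"
  assumes "achievable_load K N B P cs r" and dN: "\<forall>u<K. d u < N" and "inj_on d {..<K}"
    and \<Phi>: "\<And>u T. u < K \<Longrightarrow> \<Phi> u T \<Longrightarrow> T \<inter> (\<Union>v\<in>{v. v < K \<and> rk v \<le> rk u}. cs ! v) = {}"
  shows "(\<Sum>u<K. \<Sum>j<B. of_bool (\<Phi> u (P (d u) j))) \<le> r * real B"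
proof -
  define J where "J u = (\<lambda>j. (d u, j)) ` {j. j < B \<and> \<Phi> u (P (d u) j)}" for u
  have sum_J: "(\<Sum>u<K. \<Sum>j<B. of_bool (\<Phi> u (P (d u) j))) = real (\<Sum>u<K. card (J u))"
    unfolding J_def by (simp add: card_image inj_on_def Int_def)
  have "(\<Sum>u<K. card (J u)) = card (\<Union>u<K. J u)"
    unfolding J_def by (rule card_UN_disjoint[symmetric]) (use assms(3) in \<open>auto simp: inj_on_def\<close>)
  also have "\<dots> \<le> card (unseen_bits K B P cs d rk)"
  proof (rule card_mono)
    show "finite (unseen_bits K B P cs d rk)"
      using unseen_bits_subset[OF dN, of B P cs rk] by (rule finite_subset) simp
    show "(\<Union>u<K. J u) \<subseteq> unseen_bits K B P cs d rk"
      using \<Phi> unfolding J_def unseen_bits_def by blast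
  qed
  finally show ?thesis using sum_J card_unseen_bits_le[OF assms(1) dN, of rk] by linarith
qed

lemma inj_on_mod_shift: "inj_on (\<lambda>x. (x + c) mod N) {..<(N::nat)}"
proof -
  have "a = b" if "a \<le> b" "b < N" "(a + c) mod N = (b + c) mod N" for a b
  proof -
    have "N dvd b - a" using that mod_eq_dvd_iff_nat[of "a + c" "b + c" N] by simp
    moreover have "b - a < N" using that by simp
    ultimately show ?thesis using that(1) by (metis dvd_imp_le neq0_conv not_le diff_is_0_eq antisym)
  qed
  then show ?thesis by (intro inj_onI) (metis lessThan_iff nat_le_linear)
qed

lemma sum_mod_shift:
  assumes "0 < (N::nat)"
  shows "(\<Sum>q<N. f ((u + q) mod N)) = (\<Sum>n<N. f n)"
proof -
  have "(\<lambda>q. (q + u) mod N) ` {..<N} = {..<N}"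
    using assms inj_on_mod_shift by (intro endo_inj_surj) auto
  then show ?thesis using sum.reindex[OF inj_on_mod_shift, of f u N] by (simp add: add.commute)
qed

lemma achievable_load_whole_library: "achievable_load K N B P cs (real N)"
proof -
  have index: "n * B + j < N * B" if "n < N" "j < B" for n j
  proof -
    have "n * B + j < Suc n * B" using that by simp
    also have "\<dots> \<le> N * B" using that by (intro mult_right_mono) auto
    finally show ?thesis .
  qed
  show ?thesis unfolding achievable_load_def
    by (rule exI[of _ "\<lambda>d W. map (\<lambda>i. W (i div B) (i mod B)) [0..<N * B]"],
        rule exI[of _ "\<lambda>u d msg view j. msg ! (d u * B + j)"]) (auto simp: index)
qed

lemma sum_nested_swap:
  "(\<Sum>x\<in>A. \<Sum>y\<in>B. \<Sum>z\<in>C. f x y z) = (\<Sum>z\<in>C. \<Sum>x\<in>A. \<Sum>y\<in>B. f x y z)"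
proof -
  have "(\<Sum>x\<in>A. \<Sum>y\<in>B. \<Sum>z\<in>C. f x y z) = (\<Sum>x\<in>A. \<Sum>z\<in>C. \<Sum>y\<in>B. f x y z)"
    by (rule sum.cong[OF refl]) (rule sum.swap)
  also have "\<dots> = (\<Sum>z\<in>C. \<Sum>x\<in>A. \<Sum>y\<in>B. f x y z)"
    by (rule sum.swap)
  finally show ?thesis .
qed

lemma load_conn_lower_bound:
  fixes \<Phi> :: "nat \<Rightarrow> nat set \<Rightarrow> bool" and rk :: "nat \<Rightarrow> nat"
  assumes "K \<le> N" "0 < N" "0 < B"
    and \<Phi>: "\<And>u T. u < K \<Longrightarrow> \<Phi> u T \<Longrightarrow> T \<inter> (\<Union>v\<in>{v. v < K \<and> rk v \<le> rk u}. cs ! v) = {}"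
  shows "(\<Sum>n<N. \<Sum>j<B. \<Sum>u<K. of_bool (\<Phi> u (P n j))) \<le> real N * real B * load_conn K N B P cs"
proof -
  define Q where "Q = (\<Sum>n<N. \<Sum>j<B. \<Sum>u<K. of_bool (\<Phi> u (P n j)) :: real)"
  have NB: "0 < real N * real B" using assms by simp
  have "Q / (real N * real B) \<le> load_conn K N B P cs"
    unfolding load_conn_def
  proof (rule cInf_greatest)
    show "{r. achievable_load K N B P cs r} \<noteq> {}" using achievable_load_whole_library by blast
  next
    fix r assume "r \<in> {r. achievable_load K N B P cs r}"
    then have shifted: "(\<Sum>u<K. \<Sum>j<B. of_bool (\<Phi> u (P ((u + q) mod N) j))) \<le> r * real B" for q
      using \<Phi> assms(1,2) inj_on_mod_shift[of q N]
      by (intro sum_unseen_bits_le[where rk = rk]) (auto intro: inj_on_subset)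
    \<comment> \<open>averaging over the N cyclic shifts of the demand vector u \<mapsto> u + q\<close>
    have "Q = (\<Sum>u<K. \<Sum>n<N. \<Sum>j<B. of_bool (\<Phi> u (P n j)))"
      unfolding Q_def by (rule sum_nested_swap)
    also have "\<dots> = (\<Sum>u<K. \<Sum>q<N. \<Sum>j<B. of_bool (\<Phi> u (P ((u + q) mod N) j)))"
      by (rule sum.cong[OF refl], rule sum_mod_shift[OF assms(2), symmetric])
    also have "\<dots> = (\<Sum>q<N. \<Sum>u<K. \<Sum>j<B. of_bool (\<Phi> u (P ((u + q) mod N) j)))"
      by (rule sum.swap)
    also have "\<dots> \<le> real N * (r * real B)"
      using sum_mono[of "{..<N}", OF shifted] by simp
    finally show "Q / (real N * real B) \<le> r" using NB by (simp add: divide_le_eq algebra_simps)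
  qed
  then show ?thesis unfolding Q_def using NB by (simp add: divide_le_eq mult.commute)
qed

section \<open>Averaging over connectivities\<close>

lemma connectivities_eq_multisets_of_size: "connectivities L K = multisets_of_size (Pow {..<L}) K"
  unfolding connectivities_def multisets_of_size_def by auto

lemma finite_connectivities: "finite (connectivities L K)"
  unfolding connectivities_eq_multisets_of_size by (rule finite_multisets_of_size) simp

lemma card_connectivities: "card (connectivities L K) = (K + 2 ^ L - 1) choose K"
  unfolding connectivities_eq_multisets_of_size
  by (subst card_multisets_of_size) (auto simp: card_Pow add.commute)

lemma replicate_mset_in_connectivities: "U \<subseteq> {..<L} \<Longrightarrow> replicate_mset K U \<in> connectivities L K"
  unfolding connectivities_def by simp

lemma inj_on_replicate_mset: "0 < K \<Longrightarrow> inj_on (replicate_mset K) A"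
  by (auto intro!: inj_onI simp: replicate_mset_eq_iff)

lemma two_power_le_card_connectivities:
  assumes "0 < K"
  shows "2 ^ L \<le> card (connectivities L K)"
proof -
  have "card (replicate_mset K ` Pow {..<L}) \<le> card (connectivities L K)"
    using replicate_mset_in_connectivities by (intro card_mono finite_connectivities) auto
  moreover have "card (replicate_mset K ` Pow {..<L}) = 2 ^ L"
    by (simp add: card_image[OF inj_on_replicate_mset[OF assms]] card_Pow)
  ultimately show ?thesis by simp
qed

lemma sum_connectivities_split:
  assumes "0 < K"
  shows "(\<Sum>b\<in>connectivities L K. f b)
    = (\<Sum>b\<in>connectivities L K - replicate_mset K ` Pow {..<L}. f b) + (\<Sum>U\<in>Pow {..<L}. f (replicate_mset K U))"
proof -
  have "replicate_mset K ` Pow {..<L} \<subseteq> connectivities L K"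
    using replicate_mset_in_connectivities by auto
  then have "(\<Sum>b\<in>connectivities L K. f b)
      = (\<Sum>b\<in>connectivities L K - replicate_mset K ` Pow {..<L}. f b) + (\<Sum>b\<in>replicate_mset K ` Pow {..<L}. f b)"
    by (rule sum.subset_diff[OF _ finite_connectivities])
  then show ?thesis by (simp add: sum.reindex[OF inj_on_replicate_mset[OF assms]])
qed

lemma sum_count_connectivities_swap:
  assumes U: "U \<subseteq> {..<L}" and V: "V \<subseteq> {..<L}"
  shows "(\<Sum>b\<in>connectivities L K. count b V) = (\<Sum>b\<in>connectivities L K. count b U)"
proof -
  let ?C = "connectivities L K"
  define \<tau> where "\<tau> = Transposition.transpose U V"
  have \<tau>_Pow: "\<tau> ` Pow {..<L} \<subseteq> Pow {..<L}"
    using U V by (auto simp: \<tau>_def Transposition.transpose_def)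
  have closed: "image_mset \<tau> \<in> ?C \<rightarrow> ?C"
  proof
    fix b assume "b \<in> ?C"
    then have "size b = K" "set_mset b \<subseteq> Pow {..<L}" unfolding connectivities_def by auto
    moreover have "\<tau> ` set_mset b \<subseteq> Pow {..<L}" using \<tau>_Pow calculation(2) by blast
    ultimately show "image_mset \<tau> b \<in> ?C" unfolding connectivities_def by simp
  qed
  have count_swap: "count (image_mset \<tau> b) V = count b U" for b
  proof -
    have "\<tau> -` {V} = {U}" unfolding \<tau>_def by (rule set_eqI) (auto simp: transpose_eq_iff)
    then show ?thesis by (cases "U \<in># b") (auto simp: count_image_mset not_in_iff)
  qed
  have involution: "image_mset \<tau> (image_mset \<tau> b) = b" for b
    by (simp add: image_mset.compositionality \<tau>_def)
  have "bij_betw (image_mset \<tau>) ?C ?C"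
    using closed closed by (rule bij_betwI) (simp_all add: involution)
  then have "(\<Sum>b\<in>?C. count b V) = (\<Sum>b\<in>?C. count (image_mset \<tau> b) V)"
    by (rule sum.reindex_bij_betw[symmetric])
  then show ?thesis by (simp add: count_swap)
qed

lemma sum_count_connectivities:
  assumes U: "U \<subseteq> {..<L}"
  shows "real (\<Sum>b\<in>connectivities L K. count b U) = real K * real (card (connectivities L K)) / 2 ^ L"
proof -
  let ?C = "connectivities L K"
  have "(\<Sum>V\<in>Pow {..<L}. \<Sum>b\<in>?C. count b V) = (\<Sum>b\<in>?C. \<Sum>V\<in>Pow {..<L}. count b V)"
    by (rule sum.swap)
  also have "\<dots> = (\<Sum>b\<in>?C. K)"
  proof (rule sum.cong[OF refl])
    fix b assume "b \<in> ?C"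
    then have "size b = K" "set_mset b \<subseteq> Pow {..<L}" unfolding connectivities_def by auto
    then show "(\<Sum>V\<in>Pow {..<L}. count b V) = K"
      using size_multiset_overloaded_eq[of b] sum.mono_neutral_left[of "Pow {..<L}" "set_mset b" "count b"]
      by (simp add: not_in_iff)
  qed
  finally have "2 ^ L * (\<Sum>b\<in>?C. count b U) = K * card ?C"
    using sum_count_connectivities_swap[OF U] by (simp add: card_Pow)
  then have "real (2 ^ L * (\<Sum>b\<in>?C. count b U)) = real (K * card ?C)" by (simp only:)
  then show ?thesis by (simp add: field_simps)
qed

definition cache_rank :: "'a list \<Rightarrow> 'a set \<Rightarrow> nat" where
  "cache_rank xs U = Max (insert 0 ((\<lambda>l. Suc (position xs l)) ` U))"

lemma precedes_disjoint_if_cache_rank_le: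
  assumes "finite U" "finite V" "precedes xs U T" "cache_rank xs V \<le> cache_rank xs U"
  shows "T \<inter> V = {}"
proof (rule ccontr)
  assume "T \<inter> V \<noteq> {}"
  then obtain l where l: "l \<in> T" "l \<in> V" by blast
  have "Suc (position xs l) \<le> cache_rank xs V"
    unfolding cache_rank_def using assms(2) l(2) by (intro Max_ge) auto
  moreover have "cache_rank xs U \<in> insert 0 ((\<lambda>l. Suc (position xs l)) ` U)"
    unfolding cache_rank_def using assms(1) by (intro Max_in) auto
  ultimately obtain a where "a \<in> U" "position xs l \<le> position xs a"
    using assms(4) by auto
  then show False using assms(3) l(1) unfolding precedes_def by fastforce
qed

lemma mset_some_list: "mset (SOME xs. mset xs = b) = b"
  by (rule someI_ex) (rule ex_mset)

lemma sum_nth_eq_sum_count: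
  fixes f :: "'a \<Rightarrow> real"
  assumes "finite A" "set xs \<subseteq> A"
  shows "(\<Sum>u<length xs. f (xs ! u)) = (\<Sum>x\<in>A. real (count (mset xs) x) * f x)"
  using assms(2)
proof (induction xs)
  case (Cons a xs)
  have "(\<Sum>u<length (a # xs). f ((a # xs) ! u)) = f a + (\<Sum>u<length xs. f (xs ! u))"
    by (simp add: sum.lessThan_Suc_shift del: sum.lessThan_Suc)
  also have "\<dots> = (\<Sum>x\<in>A. of_bool (x = a) * f x) + (\<Sum>x\<in>A. real (count (mset xs) x) * f x)"
    using Cons assms(1) by simp
  also have "\<dots> = (\<Sum>x\<in>A. real (count (mset (a # xs)) x) * f x)"
    by (subst sum.distrib[symmetric], rule sum.cong) (auto simp: algebra_simps)
  finally show ?case .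
qed simp

definition precedence_bound :: "nat \<Rightarrow> nat set multiset \<Rightarrow> nat set \<Rightarrow> real" where
  "precedence_bound L b T = (\<Sum>U\<in>Pow {..<L}. real (count b U) * precedence_prob L U T)"

lemma precedence_bound_le_load_b:
  assumes b: "b \<in> connectivities L K" and "K \<le> N" "0 < N" "0 < B"
  shows "(\<Sum>n<N. \<Sum>j<B. precedence_bound L b (P n j)) \<le> real N * real B * load_b K N B P b"
proof -
  define cs where "cs = (SOME xs. mset xs = b)"
  have cs: "mset cs = b" unfolding cs_def by (rule mset_some_list)
  then have len: "length cs = K" and set_cs: "set cs \<subseteq> Pow {..<L}"
    using b unfolding connectivities_def by (auto simp flip: size_mset set_mset_mset)
  then have fin: "finite (cs ! v)" if "v < K" for v
    using that by (meson PowD finite_lessThan finite_subset nth_mem subsetD)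
  define PS where "PS = permutations_of_set {..<L}"
  define R where "R = load_b K N B P b"
  have each: "(\<Sum>n<N. \<Sum>j<B. \<Sum>u<K. of_bool (precedes xs (cs ! u) (P n j))) \<le> real N * real B * R"
    for xs
    unfolding R_def load_b_def cs_def[symmetric] using assms(2-4)
  proof (rule load_conn_lower_bound[where rk = "\<lambda>v. cache_rank xs (cs ! v)"])
    fix u T assume "u < K" "precedes xs (cs ! u) T"
    then show "T \<inter> (\<Union>v\<in>{v. v < K \<and> cache_rank xs (cs ! v) \<le> cache_rank xs (cs ! u)}. cs ! v) = {}"
      using fin precedes_disjoint_if_cache_rank_le by blast
  qed
  have perms: "(\<Sum>xs\<in>PS. of_bool (precedes xs U T)) = fact L * precedence_prob L U T" for U T
    unfolding PS_def precedence_prob_def by (simp add: Int_def)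
  have users: "(\<Sum>u<K. precedence_prob L (cs ! u) T) = precedence_bound L b T" for T
    using sum_nth_eq_sum_count[of "Pow {..<L}" cs "\<lambda>U. precedence_prob L U T"] set_cs
    unfolding precedence_bound_def len cs by simp
  have "fact L * (\<Sum>n<N. \<Sum>j<B. precedence_bound L b (P n j))
      = (\<Sum>n<N. \<Sum>j<B. \<Sum>u<K. fact L * precedence_prob L (cs ! u) (P n j))"
    unfolding users[symmetric] by (simp add: sum_distrib_left)
  also have "\<dots> = (\<Sum>n<N. \<Sum>j<B. \<Sum>xs\<in>PS. \<Sum>u<K. of_bool (precedes xs (cs ! u) (P n j)))"
    unfolding perms[symmetric] by (intro sum.cong refl) (rule sum.swap)
  also have "\<dots> = (\<Sum>xs\<in>PS. \<Sum>n<N. \<Sum>j<B. \<Sum>u<K. of_bool (precedes xs (cs ! u) (P n j)))"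
    by (rule sum_nested_swap)
  also have "\<dots> \<le> fact L * (real N * real B * R)"
    using sum_mono[of PS, OF each] unfolding PS_def by simp
  finally show ?thesis unfolding R_def by simp
qed

lemma common_caches_bound_le_load_b:
  assumes "0 < K" "K \<le> N" "0 < B"
  shows "(\<Sum>n<N. \<Sum>j<B. real K * of_bool (P n j \<inter> U = {}))
    \<le> real N * real B * load_b K N B P (replicate_mset K U)"
proof -
  define cs where "cs = (SOME xs. mset xs = replicate_mset K U)"
  have "mset cs = replicate_mset K U" unfolding cs_def by (rule mset_some_list)
  then have "length cs = K" "set cs = {U}"
    using assms(1) by (auto simp flip: size_mset set_mset_mset)
  then have "cs ! v = U" if "v < K" for v using that by (metis nth_mem singletonD)
  then have "(\<Sum>n<N. \<Sum>j<B. \<Sum>u<K. of_bool (P n j \<inter> U = {}))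
      \<le> real N * real B * load_conn K N B P cs"
    using assms by (intro load_conn_lower_bound[where rk = "\<lambda>_. 0"]) auto
  then show ?thesis unfolding load_b_def cs_def by simp
qed

lemma precedence_bound_replicate_mset:
  assumes "U \<in> Pow {..<L}"
  shows "precedence_bound L (replicate_mset K U) T = real K * precedence_prob L U T"
proof -
  have "precedence_bound L (replicate_mset K U) T
      = (\<Sum>V\<in>Pow {..<L}. if V = U then real K * precedence_prob L U T else 0)"
    unfolding precedence_bound_def by (intro sum.cong) auto
  then show ?thesis using assms by simp
qed

lemma sum_precedence_bound_connectivities:
  assumes "T \<subseteq> {..<L}"
  shows "(\<Sum>b\<in>connectivities L K. precedence_bound L b T)
    = real K * real (card (connectivities L K)) / 2 ^ L * binomial_tail_ratio L (card T)"
proof -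
  have "(\<Sum>b\<in>connectivities L K. precedence_bound L b T)
      = (\<Sum>U\<in>Pow {..<L}. real (\<Sum>b\<in>connectivities L K. count b U) * precedence_prob L U T)"
    unfolding precedence_bound_def by (subst sum.swap) (simp add: sum_distrib_right)
  also have "\<dots> = (\<Sum>U\<in>Pow {..<L}. real K * real (card (connectivities L K)) / 2 ^ L * precedence_prob L U T)"
    by (intro sum.cong refl) (subst sum_count_connectivities; simp)
  also have "\<dots> = real K * real (card (connectivities L K)) / 2 ^ L * (\<Sum>U\<in>Pow {..<L}. precedence_prob L U T)"
    by (simp only: sum_distrib_left)
  finally show ?thesis using sum_precedence_prob[OF assms] by simp
qed

lemma sum_Pow_disjoint:
  assumes "T \<subseteq> {..<L}"
  shows "(\<Sum>U\<in>Pow {..<L}. of_bool (T \<inter> U = {}) :: real) = 2 ^ (L - card T)"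
proof -
  have "Pow {..<L} \<inter> {U. T \<inter> U = {}} = Pow ({..<L} - T)" by auto
  then show ?thesis using assms by (simp add: card_Pow card_Diff_subset finite_subset)
qed

text \<open>The precedence bound is used for every connectivity except those in which all users are
  connected to the same caches, where the common-caches bound is sharper.\<close>

lemma corner_load_sum_connectivities:
  assumes "0 < K" "T \<subseteq> {..<L}"
  shows "real (card (connectivities L K)) * corner_load L K (card T)
    = (\<Sum>b\<in>connectivities L K - replicate_mset K ` Pow {..<L}. precedence_bound L b T)
      + (\<Sum>U\<in>Pow {..<L}. real K * of_bool (T \<inter> U = {}))"
proof -
  define C where "C = real (card (connectivities L K))"
  define R where "R = binomial_tail_ratio L (card T)"
  have "card T \<le> L" using card_mono[OF _ assms(2)] by simp
  have "(0::nat) < 2 ^ L" by simp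
  then have "0 < C" unfolding C_def using two_power_le_card_connectivities[OF assms(1), of L] by linarith
  have "(\<Sum>U\<in>Pow {..<L}. precedence_bound L (replicate_mset K U) T) = real K * R"
    unfolding R_def using sum_precedence_prob[OF assms(2)]
    by (simp add: precedence_bound_replicate_mset flip: sum_distrib_left)
  then have "(\<Sum>b\<in>connectivities L K - replicate_mset K ` Pow {..<L}. precedence_bound L b T)
      = real K * C / 2 ^ L * R - real K * R"
    using sum_connectivities_split[OF assms(1), of "\<lambda>b. precedence_bound L b T" L]
      sum_precedence_bound_connectivities[OF assms(2), of K]
    unfolding C_def R_def by simp
  moreover have "(\<Sum>U\<in>Pow {..<L}. real K * of_bool (T \<inter> U = {})) = real K * 2 ^ (L - card T)"
    using sum_Pow_disjoint[OF assms(2)] by (simp add: sum_distrib_left[symmetric])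
  moreover have "C * corner_load L K (card T) = real K * C / 2 ^ L * R - real K * R + real K * 2 ^ (L - card T)"
    using corner_load_eq[OF \<open>card T \<le> L\<close>, of K] \<open>0 < C\<close>
    unfolding C_def[symmetric] card_connectivities[symmetric] R_def[symmetric]
    by (simp add: field_simps)
  ultimately show ?thesis unfolding C_def[symmetric] by linarith
qed

lemma sum_corner_load_le_sum_load_b:
  assumes P: "\<And>n j. n < N \<Longrightarrow> j < B \<Longrightarrow> P n j \<subseteq> {..<L}" and "0 < K" "K \<le> N" "0 < B"
  shows "real (card (connectivities L K)) * (\<Sum>n<N. \<Sum>j<B. corner_load L K (card (P n j)))
    \<le> real N * real B * (\<Sum>b\<in>connectivities L K. load_b K N B P b)"
proof -
  let ?C = "connectivities L K"
  let ?R = "?C - replicate_mset K ` Pow {..<L}"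
  have "real (card ?C) * (\<Sum>n<N. \<Sum>j<B. corner_load L K (card (P n j)))
      = (\<Sum>n<N. \<Sum>j<B. (\<Sum>b\<in>?R. precedence_bound L b (P n j))
          + (\<Sum>U\<in>Pow {..<L}. real K * of_bool (P n j \<inter> U = {})))"
    unfolding sum_distrib_left
    by (intro sum.cong refl) (rule corner_load_sum_connectivities[OF assms(2) P]; simp)
  also have "\<dots> = (\<Sum>n<N. \<Sum>j<B. \<Sum>b\<in>?R. precedence_bound L b (P n j))
        + (\<Sum>n<N. \<Sum>j<B. \<Sum>U\<in>Pow {..<L}. real K * of_bool (P n j \<inter> U = {}))"
    by (simp only: sum.distrib)
  also have "\<dots> = (\<Sum>b\<in>?R. \<Sum>n<N. \<Sum>j<B. precedence_bound L b (P n j))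
        + (\<Sum>U\<in>Pow {..<L}. \<Sum>n<N. \<Sum>j<B. real K * of_bool (P n j \<inter> U = {}))"
    by (intro arg_cong2[where f = "(+)"] sum_nested_swap)
  also have "\<dots> \<le> (\<Sum>b\<in>?R. real N * real B * load_b K N B P b)
        + (\<Sum>U\<in>Pow {..<L}. real N * real B * load_b K N B P (replicate_mset K U))"
    using assms(2-4)
    by (intro add_mono sum_mono precedence_bound_le_load_b common_caches_bound_le_load_b) auto
  also have "\<dots> = real N * real B * (\<Sum>b\<in>?C. load_b K N B P b)"
    by (simp only: sum_connectivities_split[OF assms(2)] distrib_left sum_distrib_left)
  finally show ?thesis .
qed

lemma sum_card_placement_le:
  assumes "uncoded_placement Lam N B M P"
  shows "(\<Sum>n<N. \<Sum>j<B. real (card (P n j))) \<le> real Lam * M * real B"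
proof -
  have "(\<Sum>n<N. \<Sum>j<B. real (card (P n j))) = (\<Sum>n<N. \<Sum>j<B. \<Sum>l<Lam. of_bool (l \<in> P n j))"
  proof (intro sum.cong refl)
    fix n j assume "n \<in> {..<N}" "j \<in> {..<B}"
    then have "{..<Lam} \<inter> {l. l \<in> P n j} = P n j" using assms unfolding uncoded_placement_def by auto
    then show "real (card (P n j)) = (\<Sum>l<Lam. of_bool (l \<in> P n j))" by simp
  qed
  also have "\<dots> = (\<Sum>l<Lam. \<Sum>n<N. \<Sum>j<B. of_bool (l \<in> P n j))"
    by (rule sum_nested_swap)
  also have "\<dots> = (\<Sum>l<Lam. real (card {(n, j). n < N \<and> j < B \<and> l \<in> P n j}))"
  proof (intro sum.cong refl)
    fix l
    have "(\<Sum>n<N. \<Sum>j<B. of_bool (l \<in> P n j))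
        = (\<Sum>x\<in>{..<N} \<times> {..<B}. of_bool (l \<in> P (fst x) (snd x)) :: real)"
      by (simp only: sum.cartesian_product split_def)
    also have "({..<N} \<times> {..<B}) \<inter> {x. l \<in> P (fst x) (snd x)} = {(n, j). n < N \<and> j < B \<and> l \<in> P n j}"
      by auto
    then have "(\<Sum>x\<in>{..<N} \<times> {..<B}. of_bool (l \<in> P (fst x) (snd x)) :: real)
        = real (card {(n, j). n < N \<and> j < B \<and> l \<in> P n j})"
      by simp
    finally show "(\<Sum>n<N. \<Sum>j<B. of_bool (l \<in> P n j)) = real (card {(n, j). n < N \<and> j < B \<and> l \<in> P n j})" .
  qed
  also have "\<dots> \<le> (\<Sum>l<Lam. M * real B)"
    using assms unfolding uncoded_placement_def by (intro sum_mono) auto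
  finally show ?thesis by simp
qed

lemma R_avg_LB_le_average_load:
  assumes "1 \<le> Lam" "0 < K" "K \<le> N" "0 < B" and P: "uncoded_placement Lam N B M P"
  shows "real (card (connectivities Lam K)) * R_avg_LB Lam K N M
    \<le> (\<Sum>b\<in>connectivities Lam K. load_b K N B P b)"
proof -
  define s where "s = M * real Lam / real N"
  define t0 where "t0 = min (nat \<lfloor>s\<rfloor>) (Lam - 1)"
  define g where "g = corner_load Lam K"
  define X where "X = {..<N} \<times> {..<B}"
  have LB: "R_avg_LB Lam K N M = g t0 + (s - real t0) * (g (t0 + 1) - g t0)"
    unfolding R_avg_LB_def g_def s_def t0_def Let_def ..
  have P_sub: "P n j \<subseteq> {..<Lam}" if "n < N" "j < B" for n j
    using P that unfolding uncoded_placement_def by auto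
  have sum_X: "(\<Sum>x\<in>X. f (card (P (fst x) (snd x)))) = (\<Sum>n<N. \<Sum>j<B. f (card (P n j)))" for f :: "nat \<Rightarrow> real"
    unfolding X_def by (simp add: sum.cartesian_product split_def)
  have "real (card X) * R_avg_LB Lam K N M \<le> (\<Sum>x\<in>X. g (card (P (fst x) (snd x))))"
    unfolding LB
  proof (rule decreasing_convex_sum_ge_chord)
    show "decreasing_convex Lam g"
      unfolding g_def using two_power_le_card_connectivities[OF assms(2), of Lam]
      by (intro decreasing_convex_corner_load) (simp add: card_connectivities)
    show "t0 + 1 \<le> Lam" using assms(1) by (simp add: t0_def)
    show "finite X" by (simp add: X_def)
    show "card (P (fst x) (snd x)) \<le> Lam" if "x \<in> X" for x
      using card_mono[OF _ P_sub, of "fst x" "snd x"] that by (auto simp: X_def)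
    have "(\<Sum>x\<in>X. real (card (P (fst x) (snd x)))) \<le> real Lam * M * real B"
      using sum_card_placement_le[OF P] by (simp add: sum_X)
    also have "\<dots> = real (card X) * s"
      using assms(2,3) by (simp add: X_def s_def)
    finally show "(\<Sum>x\<in>X. real (card (P (fst x) (snd x)))) \<le> real (card X) * s" .
  qed
  then have "real N * real B * R_avg_LB Lam K N M \<le> (\<Sum>n<N. \<Sum>j<B. corner_load Lam K (card (P n j)))"
    unfolding sum_X g_def by (simp add: X_def)
  then have "real (card (connectivities Lam K)) * (real N * real B * R_avg_LB Lam K N M)
      \<le> real (card (connectivities Lam K)) * (\<Sum>n<N. \<Sum>j<B. corner_load Lam K (card (P n j)))"
    by (rule mult_left_mono) simp
  also have "\<dots> \<le> real N * real B * (\<Sum>b\<in>connectivities Lam K. load_b K N B P b)"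
    using P_sub assms(2-4) by (rule sum_corner_load_le_sum_load_b)
  finally show ?thesis using assms(2-4) by (simp add: algebra_simps)
qed

theorem theorem3:
  fixes Lam K N B :: nat and M :: real
  assumes "Lam \<ge> 1" and "K \<ge> 1" and "N \<ge> K" and "B \<ge> 1"
    and "0 \<le> M" and "M \<le> real N"
  shows "R_star_avg Lam K N B M \<ge> R_avg_LB Lam K N M"
  unfolding R_star_avg_def
proof (rule cInf_greatest)
  have "uncoded_placement Lam N B M (\<lambda>n j. {})"
    unfolding uncoded_placement_def using assms by simp
  then show "(\<lambda>P. (\<Sum>b\<in>connectivities Lam K. load_b K N B P b) / real (card (connectivities Lam K)))
      ` {P. uncoded_placement Lam N B M P} \<noteq> {}" by blast
next
  have "(0::nat) < 2 ^ Lam" by simp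
  then have card_pos: "0 < real (card (connectivities Lam K))"
    using two_power_le_card_connectivities[of K Lam] assms(2) by linarith
  fix x assume "x \<in> (\<lambda>P. (\<Sum>b\<in>connectivities Lam K. load_b K N B P b) / real (card (connectivities Lam K)))
      ` {P. uncoded_placement Lam N B M P}"
  then obtain P where "uncoded_placement Lam N B M P"
    and "x = (\<Sum>b\<in>connectivities Lam K. load_b K N B P b) / real (card (connectivities Lam K))"
    by auto
  then show "R_avg_LB Lam K N M \<le> x"
    using R_avg_LB_le_average_load[of Lam K N B M P] assms card_pos by (simp add: le_divide_eq mult.commute)
qed

end
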